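(* Let $\bar z$ be a feasible point of the MPCC $$\min f(z)\ \text{ s.t. }\ g(z)\le 0,\ h(z)=0,\ 0\le G(z)\perp H(z)\ge 0,$$ where $f:\mathbb{R}^n\to\mathbb{R}$, $g:\mathbb{R}^n\to\mathbb{R}^{n_g}$, $h:\mathbb{R}^n\to\mathbb{R}^{n_h}$, $G,H:\mathbb{R}^n\to\mathbb{R}^m$ are differentiable, and suppose MPCC-ACQ holds at $\bar z$. Then $\bar z$ is B-stationary if and only if $\bar z$ is piecewise M-stationary.
   Context: The complementarity constraint $0\le G(z)\perp H(z)\ge 0$ means $G(z)\ge0$, $H(z)\ge 0$, $G_i(z)H_i(z)=0$ for all $i$. At a feasible $\bar z$ define $I_g(\bar z)=\{i: g_i(\bar z)=0\}$, $I_h(\bar z)=\{1,\dots,n_h\}$, $\alpha(\bar z)=\{i: G_i(\bar z)=0<H_i(\bar z)\}$, $\gamma(\bar z)=\{i: G_i(\bar z)>0=H_i(\bar z)\}$, $\beta(\bar z)=\{i: G_i(\bar z)=0=H_i(\bar z)\}$. Let $\mathcal T(\bar z)$ be the (Bouligand) tangent cone of the MPCC feasible set at $\bar z$. $\bar z$ is B-stationary if $\nabla f(\bar z)^Td\ge 0$ for all $d\in\mathcal T(\bar z)$. The MPCC-linearized tangent cone is $\mathcal T^{\rm lin}_{\rm MPCC}(\bar z)=\{d:\ \nabla g_i(\bar z)^Td\le 0\ (i\in I_g(\bar z));\ \nabla h_i(\bar z)^Td=0\ (i\in I_h(\bar z));\ \nabla G_i(\bar z)^Td=0\ (i\in\alpha(\bar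 z));\ \nabla H_i(\bar z)^Td=0\ (i\in \gamma(\bar z));\ \nabla G_i(\bar z)^Td\ge0,\ \nabla H_i(\bar z)^Td\ge 0,\ (\nabla G_i(\bar z)^Td)(\nabla H_i(\bar z)^Td)=0\ (i\in\beta(\bar z))\}$. MPCC-ACQ holds at $\bar z$ if $\mathcal T(\bar z)=\mathcal T^{\rm lin}_{\rm MPCC}(\bar z)$. Piecewise M-stationarity: let $\mathcal P(\beta(\bar z))$ be the set of all pairs $(\beta_1,\beta_2)$ with $\beta_1\cup\beta_2=\beta(\bar z)$, $\beta_1\cap\beta_2=\emptyset$. $\bar z$ is piecewise M-stationary if for every $(\beta_1,\beta_2)\in\mathcal P(\beta(\bar z))$ there exist multipliers $\bar\lambda=(\bar\lambda^g,\bar\lambda^h,\bar\lambda^G,\bar\lambda^H)$ (possibly depending on the partition) with $$0=\nabla f(\bar z)+\sum_{i=1}^{n_g}\bar\lambda^g_i\nabla g_i(\bar z)+\sum_{i=1}^{n_h}\bar\lambda^h_i\nabla h_i(\bar z)-\sum_{i\in\alpha(\bar z)\cup\beta(\bar z)}\bar\lambda^G_i\nabla G_i(\bar z)-\sum_{i\in\gamma(\bar z)\cup\beta(\bar z)}\bar\lambda^H_i\nabla H_i(\bar z),$$ $\bar\lambda^g_i\ge0$ and $\bar\lambda^g_ig_i(\bar z)=0$ for all $i$; $\bar\lambda^H_i\ge 0$ for $i\in\beta_1$; $\bar\lambda^G_i\ge0$ for $i\in\beta_2$; and for every $i\in\beta(\bar z)$ either $\bar\lambda^G_i,\bar\lambda^H_i\ge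 0$ or $\bar\lambda^G_i\bar\lambda^H_i=0$. *)

theory Defs
  imports "HOL-Analysis.Analysis"
begin

text \<open>Indices are 0-based: constraints g_i for i < ng, h_i for i < nh,
  complementarity pairs G_i, H_i for i < m. R^n is an arbitrary euclidean space 'a.\<close>

definition grad :: "('a::euclidean_space \<Rightarrow> real) \<Rightarrow> 'a \<Rightarrow> 'a" where
  "grad f z = (\<Sum>b\<in>Basis. frechet_derivative f (at z) b *\<^sub>R b)"

definition mpcc_feasible ::
  "(nat \<Rightarrow> 'a \<Rightarrow> real) \<Rightarrow> (nat \<Rightarrow> 'a \<Rightarrow> real) \<Rightarrow> (nat \<Rightarrow> 'a \<Rightarrow> real) \<Rightarrow> (nat \<Rightarrow> 'a \<Rightarrow> real)
   \<Rightarrow> nat \<Rightarrow> nat \<Rightarrow> nat \<Rightarrow> 'a set" where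
  "mpcc_feasible g h G H ng nh m =
     {z. (\<forall>i<ng. g i z \<le> 0) \<and> (\<forall>i<nh. h i z = 0) \<and>
         (\<forall>i<m. G i z \<ge> 0 \<and> H i z \<ge> 0 \<and> G i z * H i z = 0)}"

definition tangent_cone :: "'a::real_normed_vector set \<Rightarrow> 'a \<Rightarrow> 'a set" where
  "tangent_cone S z = {d. \<exists>(t::nat \<Rightarrow> real) x. (\<forall>k. t k > 0) \<and> t \<longlonglongrightarrow> 0 \<and>
       (\<forall>k. x k \<in> S) \<and> (\<lambda>k. (1 / t k) *\<^sub>R (x k - z)) \<longlonglongrightarrow> d}"

definition I_g :: "(nat \<Rightarrow> 'a \<Rightarrow> real) \<Rightarrow> nat \<Rightarrow> 'a \<Rightarrow> nat set" where
  "I_g g ng z = {i. i < ng \<and> g i z = 0}"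

definition alpha_set :: "(nat \<Rightarrow> 'a \<Rightarrow> real) \<Rightarrow> (nat \<Rightarrow> 'a \<Rightarrow> real) \<Rightarrow> nat \<Rightarrow> 'a \<Rightarrow> nat set" where
  "alpha_set G H m z = {i. i < m \<and> G i z = 0 \<and> 0 < H i z}"

definition gamma_set :: "(nat \<Rightarrow> 'a \<Rightarrow> real) \<Rightarrow> (nat \<Rightarrow> 'a \<Rightarrow> real) \<Rightarrow> nat \<Rightarrow> 'a \<Rightarrow> nat set" where
  "gamma_set G H m z = {i. i < m \<and> G i z > 0 \<and> H i z = 0}"

definition beta_set :: "(nat \<Rightarrow> 'a \<Rightarrow> real) \<Rightarrow> (nat \<Rightarrow> 'a \<Rightarrow> real) \<Rightarrow> nat \<Rightarrow> 'a \<Rightarrow> nat set" where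
  "beta_set G H m z = {i. i < m \<and> G i z = 0 \<and> H i z = 0}"

definition B_stationary ::
  "('a::euclidean_space \<Rightarrow> real) \<Rightarrow> (nat \<Rightarrow> 'a \<Rightarrow> real) \<Rightarrow> (nat \<Rightarrow> 'a \<Rightarrow> real) \<Rightarrow> (nat \<Rightarrow> 'a \<Rightarrow> real)
   \<Rightarrow> (nat \<Rightarrow> 'a \<Rightarrow> real) \<Rightarrow> nat \<Rightarrow> nat \<Rightarrow> nat \<Rightarrow> 'a \<Rightarrow> bool" where
  "B_stationary f g h G H ng nh m z \<longleftrightarrow>
     (\<forall>d\<in>tangent_cone (mpcc_feasible g h G H ng nh m) z. grad f z \<bullet> d \<ge> 0)"

definition mpcc_lin_cone ::
  "(nat \<Rightarrow> 'a::euclidean_space \<Rightarrow> real) \<Rightarrow> (nat \<Rightarrow> 'a \<Rightarrow> real) \<Rightarrow> (nat \<Rightarrow> 'a \<Rightarrow> real)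
   \<Rightarrow> (nat \<Rightarrow> 'a \<Rightarrow> real) \<Rightarrow> nat \<Rightarrow> nat \<Rightarrow> nat \<Rightarrow> 'a \<Rightarrow> 'a set" where
  "mpcc_lin_cone g h G H ng nh m z =
     {d. (\<forall>i\<in>I_g g ng z. grad (g i) z \<bullet> d \<le> 0) \<and>
         (\<forall>i<nh. grad (h i) z \<bullet> d = 0) \<and>
         (\<forall>i\<in>alpha_set G H m z. grad (G i) z \<bullet> d = 0) \<and>
         (\<forall>i\<in>gamma_set G H m z. grad (H i) z \<bullet> d = 0) \<and>
         (\<forall>i\<in>beta_set G H m z. grad (G i) z \<bullet> d \<ge> 0 \<and> grad (H i) z \<bullet> d \<ge> 0 \<and>
              (grad (G i) z \<bullet> d) * (grad (H i) z \<bullet> d) = 0)}"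

definition MPCC_ACQ ::
  "(nat \<Rightarrow> 'a::euclidean_space \<Rightarrow> real) \<Rightarrow> (nat \<Rightarrow> 'a \<Rightarrow> real) \<Rightarrow> (nat \<Rightarrow> 'a \<Rightarrow> real)
   \<Rightarrow> (nat \<Rightarrow> 'a \<Rightarrow> real) \<Rightarrow> nat \<Rightarrow> nat \<Rightarrow> nat \<Rightarrow> 'a \<Rightarrow> bool" where
  "MPCC_ACQ g h G H ng nh m z \<longleftrightarrow>
     tangent_cone (mpcc_feasible g h G H ng nh m) z = mpcc_lin_cone g h G H ng nh m z"

definition piecewise_M_stationary ::
  "('a::euclidean_space \<Rightarrow> real) \<Rightarrow> (nat \<Rightarrow> 'a \<Rightarrow> real) \<Rightarrow> (nat \<Rightarrow> 'a \<Rightarrow> real) \<Rightarrow> (nat \<Rightarrow> 'a \<Rightarrow> real)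
   \<Rightarrow> (nat \<Rightarrow> 'a \<Rightarrow> real) \<Rightarrow> nat \<Rightarrow> nat \<Rightarrow> nat \<Rightarrow> 'a \<Rightarrow> bool" where
  "piecewise_M_stationary f g h G H ng nh m z \<longleftrightarrow>
     (\<forall>\<beta>1 \<beta>2. \<beta>1 \<union> \<beta>2 = beta_set G H m z \<and> \<beta>1 \<inter> \<beta>2 = {} \<longrightarrow>
        (\<exists>lg lh lG lH :: nat \<Rightarrow> real.
           0 = grad f z + (\<Sum>i<ng. lg i *\<^sub>R grad (g i) z) + (\<Sum>i<nh. lh i *\<^sub>R grad (h i) z)
               - (\<Sum>i\<in>alpha_set G H m z \<union> beta_set G H m z. lG i *\<^sub>R grad (G i) z)
               - (\<Sum>i\<in>gamma_set G H m z \<union> beta_set G H m z. lH i *\<^sub>R grad (H i) z) \<and>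
           (\<forall>i<ng. lg i \<ge> 0 \<and> lg i * g i z = 0) \<and>
           (\<forall>i\<in>\<beta>1. lH i \<ge> 0) \<and> (\<forall>i\<in>\<beta>2. lG i \<ge> 0) \<and>
           (\<forall>i\<in>beta_set G H m z. (lG i \<ge> 0 \<and> lH i \<ge> 0) \<or> lG i * lH i = 0)))"

end

theory Submission
  imports Defs "HOL-Homology.Brouwer_Degree"
begin

(* Under MPCC-ACQ, B-stationarity says that grad f(z) is nonnegative on the linearized cone,
   which is the union over S <= beta of the polyhedral cones of the tightened problems
   (G_i = 0 <= H_i on S, H_i = 0 <= G_i on beta - S).  Farkas' lemma gives, for each S,
   multipliers with lH >= 0 on S and lG >= 0 on beta - S.  Given a partition (beta1, beta2),
   these multipliers are averaged with the multilinear weights of a point t of the cube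
   [-1,1]^beta; the Poincare-Miranda theorem, obtained from the non-contractibility of spheres,
   supplies a t at which every biactive index gets the prescribed sign and the M-condition.
   Conversely, for d in the linearized cone, piecewise M-stationarity for the partition given by
   the vanishing of grad G_i(z) . d makes every term of grad f(z) . d nonnegative. *)

definition nsphere_normalize :: "nat \<Rightarrow> (nat \<Rightarrow> real) \<Rightarrow> nat \<Rightarrow> real" where
  "nsphere_normalize n z = (\<lambda>i. if i \<le> n then z i / sqrt (\<Sum>j\<le>n. (z j)\<^sup>2) else 0)"

lemma sum_power2_pos:
  fixes z :: "nat \<Rightarrow> real"
  assumes "i \<le> n" "z i \<noteq> 0"
  shows "(\<Sum>j\<le>n. (z j)\<^sup>2) > 0"
  using assms by (intro sum_pos2[of _ i]) auto

lemma nsphere_normalize_in_nsphere: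
  assumes "\<exists>i\<le>n. z i \<noteq> 0"
  shows "nsphere_normalize n z \<in> topspace (nsphere n)"
proof -
  have pos: "(\<Sum>j\<le>n. (z j)\<^sup>2) > 0"
    using assms sum_power2_pos by blast
  have "(\<Sum>i\<le>n. (nsphere_normalize n z i)\<^sup>2) = (\<Sum>i\<le>n. (z i)\<^sup>2 / (\<Sum>j\<le>n. (z j)\<^sup>2))"
    using pos by (intro sum.cong) (auto simp: nsphere_normalize_def power_divide)
  also have "\<dots> = 1"
    using pos by (simp add: sum_divide_distrib[symmetric])
  finally show ?thesis
    by (simp add: nsphere nsphere_normalize_def)
qed

lemma nsphere_normalize_id:
  assumes "y \<in> topspace (nsphere n)"
  shows "nsphere_normalize n y = y"
  using assms by (auto simp: nsphere nsphere_normalize_def fun_eq_iff)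

lemma continuous_map_nsphere_normalize:
  assumes cont: "\<And>i. i \<le> n \<Longrightarrow> continuous_map X euclideanreal (\<lambda>x. f x i)"
    and nonzero: "\<And>x. x \<in> topspace X \<Longrightarrow> \<exists>i\<le>n. f x i \<noteq> 0"
  shows "continuous_map X (nsphere n) (\<lambda>x. nsphere_normalize n (f x))"
proof -
  have "continuous_map X euclideanreal (\<lambda>x. nsphere_normalize n (f x) i)" for i
  proof (cases "i \<le> n")
    case True
    have "continuous_map X euclideanreal (\<lambda>x. sqrt (\<Sum>j\<le>n. (f x j)\<^sup>2))"
      by (intro continuous_map_sqrt continuous_map_sum continuous_map_real_pow cont) auto
    moreover have "sqrt (\<Sum>j\<le>n. (f x j)\<^sup>2) \<noteq> 0" if "x \<in> topspace X" for x
      using nonzero[OF that] sum_power2_pos by (metis less_irrefl real_sqrt_eq_zero_cancel_iff)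
    ultimately show ?thesis
      using True by (simp add: nsphere_normalize_def continuous_map_real_divide cont)
  qed (simp add: nsphere_normalize_def)
  then show ?thesis
    using nsphere_normalize_in_nsphere nonzero
    by (auto simp: nsphere continuous_map_in_subtopology continuous_map_componentwise_UNIV)
qed

lemma nonvanishing_map_opposes_nsphere_point:
  fixes K :: "(nat \<Rightarrow> real) \<Rightarrow> nat \<Rightarrow> real"
  assumes cont: "\<And>i. i \<le> n \<Longrightarrow> continuous_map (powertop_real UNIV) euclideanreal (\<lambda>y. K y i)"
    and nonzero: "\<And>y. \<exists>i\<le>n. K y i \<noteq> 0"
  obtains y s where "y \<in> topspace (nsphere n)" "0 \<le> s" "s \<le> 1"
    "\<forall>i\<le>n. (1 - s) * y i + s * K y i = 0"
proof (rule ccontr)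
  assume "\<not> thesis"
  with that have no_zero: "\<exists>i\<le>n. (1 - s) * y i + s * K y i \<noteq> 0"
    if "y \<in> topspace (nsphere n)" "0 \<le> s" "s \<le> 1" for y s
    using that by blast
  \<comment> \<open>Then the segment from \<open>y\<close> to \<open>K y\<close> and the shrinking \<open>K ((1 - s) y)\<close>, normalized, contract
    the sphere.\<close>
  let ?X = "prod_topology (top_of_set {0..1::real}) (nsphere n)"
  have cont_fst: "continuous_map ?X euclideanreal fst"
    using continuous_map_fst continuous_map_into_fulltopology by blast
  have cont_snd: "continuous_map ?X euclideanreal (\<lambda>x. snd x j)" for j
    using continuous_map_compose[OF continuous_map_snd continuous_map_nsphere_projection]
    by (simp add: o_def)
  have cont_K: "continuous_map ?X euclideanreal (\<lambda>x. K (\<phi> x) i)"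
    if "\<And>j. continuous_map ?X euclideanreal (\<lambda>x. \<phi> x j)" "i \<le> n" for \<phi> i
  proof -
    have "continuous_map ?X (powertop_real UNIV) \<phi>"
      using that(1) by (simp add: continuous_map_componentwise_UNIV)
    from continuous_map_compose[OF this cont[OF that(2)]] show ?thesis
      by (simp add: o_def)
  qed
  have "homotopic_with (\<lambda>x. True) (nsphere n) (nsphere n) id (\<lambda>y. nsphere_normalize n (K y))"
    unfolding homotopic_with[OF refl]
  proof (intro exI conjI ballI)
    show "continuous_map ?X (nsphere n)
        (\<lambda>x. nsphere_normalize n (\<lambda>i. (1 - fst x) * snd x i + fst x * K (snd x) i))"
    proof (rule continuous_map_nsphere_normalize)
      fix i assume "i \<le> n"
      then show "continuous_map ?X euclideanreal (\<lambda>x. (1 - fst x) * snd x i + fst x * K (snd x) i)"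
        by (intro continuous_map_add continuous_map_real_mult continuous_map_diff cont_fst cont_snd
            cont_K) auto
    qed (use no_zero in auto)
  qed (auto simp: nsphere_normalize_id)
  moreover have "homotopic_with (\<lambda>x. True) (nsphere n) (nsphere n)
      (\<lambda>y. nsphere_normalize n (K y)) (\<lambda>y. nsphere_normalize n (K (\<lambda>j. 0)))"
    unfolding homotopic_with[OF refl]
    by (intro exI[of _ "\<lambda>x. nsphere_normalize n (K (\<lambda>j. (1 - fst x) * snd x j))"] conjI ballI
        continuous_map_nsphere_normalize cont_K nonzero continuous_map_real_mult continuous_map_diff
        cont_fst cont_snd) auto
  ultimately have "contractible_space (nsphere n)"
    unfolding contractible_space_def using homotopic_with_trans by blast
  then show False
    using non_contractible_space_nsphere by blast
qed

lemma exists_large_coordinate: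
  fixes y :: "nat \<Rightarrow> real"
  assumes "(\<Sum>i\<le>n. (y i)\<^sup>2) = 1"
  obtains i where "i \<le> n" "1 \<le> real (Suc n) * \<bar>y i\<bar>"
proof (rule ccontr)
  assume "\<not> thesis"
  with that have "real (Suc n) * \<bar>y i\<bar> < 1" if "i \<le> n" for i
    using that by force
  then have "\<bar>y i\<bar> < 1 / real (Suc n)" if "i \<le> n" for i
    using that by (simp add: less_divide_eq mult.commute)
  then have "(y i)\<^sup>2 < (1 / real (Suc n))\<^sup>2" if "i \<le> n" for i
    using that by (metis abs_ge_zero power2_abs power_strict_mono zero_less_numeral)
  then have "(\<Sum>i\<le>n. (y i)\<^sup>2) < (\<Sum>i\<le>n. (1 / real (Suc n))\<^sup>2)"
    by (intro sum_strict_mono) auto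
  also have "\<dots> \<le> 1"
    by (simp add: power2_eq_square)
  finally show False
    using assms by simp
qed

theorem Poincare_Miranda:
  fixes F :: "(nat \<Rightarrow> real) \<Rightarrow> nat \<Rightarrow> real"
  assumes cont: "\<And>i. i \<le> n \<Longrightarrow> continuous_map (powertop_real UNIV) euclideanreal (\<lambda>t. F t i)"
    and lower_face: "\<And>t i. \<forall>j\<le>n. \<bar>t j\<bar> \<le> 1 \<Longrightarrow> i \<le> n \<Longrightarrow> t i = -1 \<Longrightarrow> F t i \<le> 0"
    and upper_face: "\<And>t i. \<forall>j\<le>n. \<bar>t j\<bar> \<le> 1 \<Longrightarrow> i \<le> n \<Longrightarrow> t i = 1 \<Longrightarrow> F t i \<ge> 0"
  obtains t where "\<forall>j\<le>n. \<bar>t j\<bar> \<le> 1" "\<forall>i\<le>n. F t i = 0"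
proof (rule ccontr)
  assume "\<not> thesis"
  \<comment> \<open>\<open>\<tau>\<close> pushes each point \<open>y\<close> of the sphere onto a face of the cube: \<open>\<tau> y i = sgn (y i)\<close>
    for some \<open>i\<close>.\<close>
  define \<tau> where "\<tau> y = (\<lambda>j. max (-1) (min 1 (real (Suc n) * y j)))" for y :: "nat \<Rightarrow> real"
  have \<tau>_cube: "\<forall>j\<le>n. \<bar>\<tau> y j\<bar> \<le> 1" for y
    by (simp add: \<tau>_def abs_le_iff)
  with \<open>\<not> thesis\<close> that have nonzero: "\<exists>i\<le>n. F (\<tau> y) i \<noteq> 0" for y
    by blast
  have "continuous_map (powertop_real UNIV) (powertop_real UNIV) \<tau>"
    unfolding \<tau>_def continuous_map_componentwise_UNIV
    by (intro allI continuous_map_real_max continuous_map_real_min continuous_map_real_mult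
        continuous_map_product_projection continuous_map_const[THEN iffD2]) auto
  then have cont_F\<tau>: "continuous_map (powertop_real UNIV) euclideanreal (\<lambda>y. F (\<tau> y) i)"
    if "i \<le> n" for i
    using continuous_map_compose[OF _ cont[OF that]] by (simp add: o_def)
  obtain y s where y: "y \<in> topspace (nsphere n)" and s: "0 \<le> s" "s \<le> 1"
    and opposite: "\<forall>i\<le>n. (1 - s) * y i + s * F (\<tau> y) i = 0"
    by (rule nonvanishing_map_opposes_nsphere_point[OF cont_F\<tau> nonzero])
  have "s \<noteq> 1"
    using opposite nonzero[of y] by auto
  with s have "1 - s > 0"
    by simp
  from y obtain i where i: "i \<le> n" "1 \<le> real (Suc n) * \<bar>y i\<bar>"
    by (auto simp: nsphere intro: exists_large_coordinate)
  then consider "real (Suc n) * y i \<ge> 1" | "real (Suc n) * y i \<le> -1"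
    by (cases "y i \<ge> 0") (simp_all add: abs_if)
  then show False
  proof cases
    case 1
    then have "\<tau> y i = 1" "y i > 0"
      by (simp add: \<tau>_def, smt (verit) mult_nonneg_nonpos of_nat_0_le_iff)
    then have "F (\<tau> y) i \<ge> 0" "(1 - s) * y i > 0"
      using upper_face[OF \<tau>_cube i(1)] \<open>1 - s > 0\<close> by simp_all
    then show False
      using opposite i(1) s by (smt (verit) mult_nonneg_nonneg)
  next
    case 2
    then have "\<tau> y i = -1" "y i < 0"
      by (simp add: \<tau>_def, smt (verit) mult_nonneg_nonneg of_nat_0_le_iff)
    then have "F (\<tau> y) i \<le> 0" "(1 - s) * y i < 0"
      using lower_face[OF \<tau>_cube i(1)] \<open>1 - s > 0\<close> by (simp_all add: mult_pos_neg)
    then show False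
      using opposite i(1) s by (smt (verit) mult_nonneg_nonpos)
  qed
qed

theorem Poincare_Miranda_finite:
  fixes F :: "('b \<Rightarrow> real) \<Rightarrow> 'b \<Rightarrow> real"
  assumes fin: "finite B"
    and cont: "\<And>j. j \<in> B \<Longrightarrow> continuous_map (powertop_real UNIV) euclideanreal (\<lambda>t. F t j)"
    and lower_face: "\<And>t j. \<forall>k\<in>B. \<bar>t k\<bar> \<le> 1 \<Longrightarrow> j \<in> B \<Longrightarrow> t j = -1 \<Longrightarrow> F t j \<le> 0"
    and upper_face: "\<And>t j. \<forall>k\<in>B. \<bar>t k\<bar> \<le> 1 \<Longrightarrow> j \<in> B \<Longrightarrow> t j = 1 \<Longrightarrow> F t j \<ge> 0"
  obtains t where "\<forall>k\<in>B. \<bar>t k\<bar> \<le> 1" "\<forall>j\<in>B. F t j = 0"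
proof (cases "B = {}")
  case False
  then obtain n where "card B = Suc n"
    using fin by (cases "card B") auto
  then obtain e where e: "bij_betw e {..n} B"
    using ex_bij_betw_nat_finite[OF fin] by (metis atLeast0LessThan lessThan_Suc_atMost)
  define \<iota> where "\<iota> = inv_into {..n} e"
  have \<iota>: "\<iota> j \<le> n" "e (\<iota> j) = j" if "j \<in> B" for j
    using that bij_betwE[OF bij_betw_inv_into[OF e]] bij_betw_inv_into_right[OF e]
    by (auto simp: \<iota>_def)
  have e: "e i \<in> B" "\<iota> (e i) = i" if "i \<le> n" for i
    using that bij_betwE[OF e] bij_betw_inv_into_left[OF e] by (auto simp: \<iota>_def)
  define F' where "F' s i = F (\<lambda>j. s (\<iota> j)) (e i)" for s i
  have "continuous_map (powertop_real UNIV) (powertop_real UNIV) (\<lambda>s j. s (\<iota> j))"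
    by (auto simp: continuous_map_componentwise_UNIV intro: continuous_map_product_projection)
  then have cont': "continuous_map (powertop_real UNIV) euclideanreal (\<lambda>s. F' s i)" if "i \<le> n" for i
    using continuous_map_compose[OF _ cont[OF e(1)[OF that]]] by (simp add: F'_def o_def)
  have cube: "\<forall>k\<in>B. \<bar>s (\<iota> k)\<bar> \<le> 1" if "\<forall>i\<le>n. \<bar>s i\<bar> \<le> 1" for s
    using that \<iota> by blast
  have lower': "F' s i \<le> 0" if "\<forall>i\<le>n. \<bar>s i\<bar> \<le> 1" "i \<le> n" "s i = -1" for s i
    using lower_face[OF cube[OF that(1)] e(1)[OF that(2)]] that e by (simp add: F'_def)
  have upper': "F' s i \<ge> 0" if "\<forall>i\<le>n. \<bar>s i\<bar> \<le> 1" "i \<le> n" "s i = 1" for s i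
    using upper_face[OF cube[OF that(1)] e(1)[OF that(2)]] that e by (simp add: F'_def)
  obtain s where s: "\<forall>i\<le>n. \<bar>s i\<bar> \<le> 1" "\<forall>i\<le>n. F' s i = 0"
    by (rule Poincare_Miranda[OF cont' lower' upper'])
  have "F (\<lambda>j. s (\<iota> j)) j = 0" if "j \<in> B" for j
    using s(2)[rule_format, of "\<iota> j"] \<iota>[OF that] by (simp add: F'_def)
  then show ?thesis
    using that[OF cube[OF s(1)]] by blast
qed (rule that; simp)

text \<open>The weight of the vertex \<open>Q\<close> of the cube \<open>[-1, 1]\<^sup>B\<close> in multilinear interpolation at \<open>u\<close>.\<close>
definition multilinear_weight :: "('b \<Rightarrow> real) \<Rightarrow> 'b set \<Rightarrow> 'b set \<Rightarrow> real" where
  "multilinear_weight u B Q = (\<Prod>j\<in>Q. (1 + u j) / 2) * (\<Prod>j\<in>B - Q. (1 - u j) / 2)"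

lemma multilinear_weight_nonneg:
  assumes "\<forall>j\<in>B. \<bar>u j\<bar> \<le> 1" "Q \<subseteq> B"
  shows "multilinear_weight u B Q \<ge> 0"
  unfolding multilinear_weight_def using assms
  by (intro mult_nonneg_nonneg prod_nonneg) (fastforce simp: abs_le_iff)+

lemma sum_multilinear_weight:
  assumes "finite B"
  shows "(\<Sum>Q\<in>Pow B. multilinear_weight u B Q) = 1"
proof -
  have "(\<Sum>Q\<in>Pow B. multilinear_weight u B Q) = (\<Prod>j\<in>B. (1 + u j) / 2 + (1 - u j) / 2)"
    unfolding multilinear_weight_def by (rule prod_add[OF assms, symmetric])
  also have "\<dots> = 1"
    by (simp add: field_simps)
  finally show ?thesis .
qed

lemma multilinear_average_nonneg_upper_face:
  assumes "finite B" "\<forall>k\<in>B. \<bar>u k\<bar> \<le> 1" "j \<in> B" "u j = 1"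
    and "\<And>Q. Q \<subseteq> B \<Longrightarrow> j \<in> Q \<Longrightarrow> 0 \<le> P Q"
  shows "0 \<le> (\<Sum>Q\<in>Pow B. multilinear_weight u B Q * P Q)"
proof (rule sum_nonneg)
  fix Q assume Q: "Q \<in> Pow B"
  show "0 \<le> multilinear_weight u B Q * P Q"
  proof (cases "j \<in> Q")
    case False
    then have "(\<Prod>k\<in>B - Q. (1 - u k) / 2) = 0"
      using assms by (intro prod_zero bexI[of _ j]) auto
    then show ?thesis
      by (simp add: multilinear_weight_def)
  next
    case True
    have "0 \<le> multilinear_weight u B Q"
      using assms(2) Q by (intro multilinear_weight_nonneg) auto
    with True Q assms(5) show ?thesis
      by simp
  qed
qed

lemma multilinear_average_nonneg_lower_face:
  assumes "finite B" "\<forall>k\<in>B. \<bar>u k\<bar> \<le> 1" "j \<in> B" "u j = -1"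
    and "\<And>Q. Q \<subseteq> B \<Longrightarrow> j \<in> B - Q \<Longrightarrow> 0 \<le> A Q"
  shows "0 \<le> (\<Sum>Q\<in>Pow B. multilinear_weight u B Q * A Q)"
proof (rule sum_nonneg)
  fix Q assume Q: "Q \<in> Pow B"
  show "0 \<le> multilinear_weight u B Q * A Q"
  proof (cases "j \<in> Q")
    case True
    then have "(\<Prod>k\<in>Q. (1 + u k) / 2) = 0"
      using assms Q finite_subset by (intro prod_zero bexI[of _ j]) auto
    then show ?thesis
      by (simp add: multilinear_weight_def)
  next
    case False
    have "0 \<le> multilinear_weight u B Q"
      using assms(2) Q by (intro multilinear_weight_nonneg) auto
    with False Q assms(3,5) show ?thesis
      by simp
  qed
qed

lemma sign_pattern_convex_combination:
  fixes B :: "'b set" and P A :: "'b set \<Rightarrow> 'b \<Rightarrow> real"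
  assumes fin: "finite B"
    and P_nonneg: "\<And>Q j. Q \<subseteq> B \<Longrightarrow> j \<in> Q \<Longrightarrow> P Q j \<ge> 0"
    and A_nonneg: "\<And>Q j. Q \<subseteq> B \<Longrightarrow> j \<in> B - Q \<Longrightarrow> A Q j \<ge> 0"
  obtains w where "\<forall>Q\<in>Pow B. w Q \<ge> 0" "sum w (Pow B) = 1"
    "\<forall>j\<in>B. (\<Sum>Q\<in>Pow B. w Q * P Q j) \<ge> 0"
    "\<forall>j\<in>B. (\<Sum>Q\<in>Pow B. w Q * A Q j) \<ge> 0 \<or> (\<Sum>Q\<in>Pow B. w Q * P Q j) = 0"
proof -
  define a where "a t j = (\<Sum>Q\<in>Pow B. multilinear_weight t B Q * A Q j)" for t j
  define b where "b t j = (\<Sum>Q\<in>Pow B. multilinear_weight t B Q * P Q j)" for t j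
  \<comment> \<open>\<open>F t j = 0\<close> says exactly \<open>b t j \<ge> 0\<close> and (\<open>a t j \<ge> 0\<close> or \<open>b t j = 0\<close>).\<close>
  define F where "F t j = min (b t j) (max 0 (- a t j))" for t j
  have "continuous_on UNIV (\<lambda>t. multilinear_weight t B Q)" for Q
    unfolding multilinear_weight_def
    by (intro continuous_intros continuous_on_product_coordinates) auto
  then have "continuous_on UNIV (\<lambda>t. F t j)" for j
    unfolding F_def a_def b_def by (intro continuous_intros)
  then have cont: "continuous_map (powertop_real UNIV) euclideanreal (\<lambda>t. F t j)" for j
    by (simp add: euclidean_product_topology)
  have lower: "F t j \<le> 0" if "\<forall>k\<in>B. \<bar>t k\<bar> \<le> 1" "j \<in> B" "t j = -1" for t j
    using multilinear_average_nonneg_lower_face[OF fin that] A_nonneg by (simp add: F_def a_def)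
  have upper: "F t j \<ge> 0" if "\<forall>k\<in>B. \<bar>t k\<bar> \<le> 1" "j \<in> B" "t j = 1" for t j
    using multilinear_average_nonneg_upper_face[OF fin that] P_nonneg by (simp add: F_def b_def)
  obtain t where t: "\<forall>k\<in>B. \<bar>t k\<bar> \<le> 1" "\<forall>j\<in>B. F t j = 0"
    by (rule Poincare_Miranda_finite[OF fin cont lower upper])
  have F_zero: "b t j \<ge> 0 \<and> (a t j \<ge> 0 \<or> b t j = 0)" if "j \<in> B" for j
    using t(2) that by (auto simp: F_def min_def max_def split: if_splits)
  show ?thesis
  proof (rule that[of "multilinear_weight t B"])
    show "\<forall>Q\<in>Pow B. 0 \<le> multilinear_weight t B Q"
      using t(1) multilinear_weight_nonneg by blast
    show "sum (multilinear_weight t B) (Pow B) = 1"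
      using fin by (rule sum_multilinear_weight)
    show "\<forall>j\<in>B. (\<Sum>Q\<in>Pow B. multilinear_weight t B Q * P Q j) \<ge> 0"
      "\<forall>j\<in>B. (\<Sum>Q\<in>Pow B. multilinear_weight t B Q * A Q j) \<ge> 0 \<or>
        (\<Sum>Q\<in>Pow B. multilinear_weight t B Q * P Q j) = 0"
      using F_zero by (auto simp: a_def b_def)
  qed
qed

lemma partition_sign_pattern_convex_combination:
  fixes X Y :: "'b set \<Rightarrow> 'b \<Rightarrow> real"
  assumes fin: "finite B" and B1: "B1 \<subseteq> B"
    and X_nonneg: "\<And>S j. S \<subseteq> B \<Longrightarrow> j \<in> S \<Longrightarrow> 0 \<le> X S j"
    and Y_nonneg: "\<And>S j. S \<subseteq> B \<Longrightarrow> j \<in> B - S \<Longrightarrow> 0 \<le> Y S j"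
  obtains w where "\<forall>S\<in>Pow B. 0 \<le> w S" "sum w (Pow B) = 1"
    "\<forall>j\<in>B1. 0 \<le> (\<Sum>S\<in>Pow B. w S * X S j) \<and>
      (0 \<le> (\<Sum>S\<in>Pow B. w S * Y S j) \<or> (\<Sum>S\<in>Pow B. w S * X S j) = 0)"
    "\<forall>j\<in>B - B1. 0 \<le> (\<Sum>S\<in>Pow B. w S * Y S j) \<and>
      (0 \<le> (\<Sum>S\<in>Pow B. w S * X S j) \<or> (\<Sum>S\<in>Pow B. w S * Y S j) = 0)"
proof -
  \<comment> \<open>Toggling membership outside \<open>B1\<close> is an involution of \<open>Pow B\<close> that exchanges the roles of
    \<open>X\<close> and \<open>Y\<close> there.\<close>
  define \<phi> where "\<phi> Q = Q \<inter> B1 \<union> (B - B1 - Q)" for Q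
  have \<phi>\<phi>: "\<phi> (\<phi> Q) = Q" if "Q \<subseteq> B" for Q
    using that B1 by (auto simp: \<phi>_def)
  have \<phi>B: "\<phi> Q \<subseteq> B" for Q
    using B1 by (auto simp: \<phi>_def)
  define P where "P Q j = (if j \<in> B1 then X (\<phi> Q) j else Y (\<phi> Q) j)" for Q j
  define A where "A Q j = (if j \<in> B1 then Y (\<phi> Q) j else X (\<phi> Q) j)" for Q j
  have P_nonneg: "P Q j \<ge> 0" if "Q \<subseteq> B" "j \<in> Q" for Q j
    using X_nonneg[OF \<phi>B] Y_nonneg[OF \<phi>B] that by (auto simp: P_def \<phi>_def)
  have A_nonneg: "A Q j \<ge> 0" if "Q \<subseteq> B" "j \<in> B - Q" for Q j
    using X_nonneg[OF \<phi>B] Y_nonneg[OF \<phi>B] that by (auto simp: A_def \<phi>_def)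
  obtain w where w: "\<forall>Q\<in>Pow B. w Q \<ge> 0" "sum w (Pow B) = 1"
    and P: "\<forall>j\<in>B. (\<Sum>Q\<in>Pow B. w Q * P Q j) \<ge> 0"
    and A: "\<forall>j\<in>B. (\<Sum>Q\<in>Pow B. w Q * A Q j) \<ge> 0 \<or> (\<Sum>Q\<in>Pow B. w Q * P Q j) = 0"
    by (rule sign_pattern_convex_combination[OF fin P_nonneg A_nonneg])
  have reindex: "(\<Sum>S\<in>Pow B. w (\<phi> S) * h S) = (\<Sum>Q\<in>Pow B. w Q * h (\<phi> Q))" for h :: "'b set \<Rightarrow> real"
    by (rule sum.reindex_bij_witness[of _ \<phi> \<phi>]) (auto simp: \<phi>\<phi> \<phi>B)
  have sums_B1: "(\<Sum>S\<in>Pow B. (w \<circ> \<phi>) S * X S j) = (\<Sum>Q\<in>Pow B. w Q * P Q j)"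
    "(\<Sum>S\<in>Pow B. (w \<circ> \<phi>) S * Y S j) = (\<Sum>Q\<in>Pow B. w Q * A Q j)" if "j \<in> B1" for j
    using that by (simp_all add: reindex P_def A_def)
  have sums_B2: "(\<Sum>S\<in>Pow B. (w \<circ> \<phi>) S * Y S j) = (\<Sum>Q\<in>Pow B. w Q * P Q j)"
    "(\<Sum>S\<in>Pow B. (w \<circ> \<phi>) S * X S j) = (\<Sum>Q\<in>Pow B. w Q * A Q j)" if "j \<notin> B1" for j
    using that by (simp_all add: reindex P_def A_def)
  show ?thesis
  proof (rule that[of "w \<circ> \<phi>"])
    show "\<forall>S\<in>Pow B. 0 \<le> (w \<circ> \<phi>) S"
      using w(1) \<phi>B by auto
    show "sum (w \<circ> \<phi>) (Pow B) = 1"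
      using reindex[of "\<lambda>_. 1"] w(2) by (simp add: o_def)
  qed (use P A B1 sums_B1 sums_B2 in auto)
qed

lemma convex_cone_sum:
  assumes "convex_cone C" "finite J" "\<forall>j\<in>J. 0 \<le> c j \<and> q j \<in> C"
  shows "(\<Sum>j\<in>J. c j *\<^sub>R q j) \<in> C"
  using assms(2,3)
proof (induction J rule: finite_induct)
  case empty
  then show ?case
    using convex_cone_contains_0[OF assms(1)] by simp
next
  case (insert x F)
  then have "c x *\<^sub>R q x \<in> C" "(\<Sum>j\<in>F. c j *\<^sub>R q j) \<in> C"
    using convex_cone_scaleR[OF assms(1)] by auto
  then show ?case
    using convex_cone_add[OF assms(1)] insert.hyps by simp
qed

lemma convex_cone_hull_finite:
  fixes q :: "'j \<Rightarrow> 'a::real_vector"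
  assumes "finite J"
  shows "convex_cone hull (q ` J) = {\<Sum>j\<in>J. c j *\<^sub>R q j | c. \<forall>j\<in>J. 0 \<le> c j}"
    (is "_ = ?K")
proof
  show "convex_cone hull (q ` J) \<subseteq> ?K"
  proof (rule hull_minimal)
    show "q ` J \<subseteq> ?K"
    proof (rule image_subsetI)
      fix i assume "i \<in> J"
      have "(\<Sum>j\<in>J. (if j = i then 1 else 0) *\<^sub>R q j) = (\<Sum>j\<in>J. if j = i then q j else 0)"
        by (rule sum.cong) auto
      with \<open>i \<in> J\<close> assms have "q i = (\<Sum>j\<in>J. (if j = i then 1 else 0) *\<^sub>R q j)"
        by simp
      then show "q i \<in> ?K"
        by (intro CollectI exI[of _ "\<lambda>j. if j = i then 1 else 0"]) auto
    qed
    show "convex_cone ?K"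
      unfolding convex_cone_iff
    proof (intro conjI ballI allI impI)
      show "0 \<in> ?K"
        by (intro CollectI exI[of _ "\<lambda>j. 0"]) auto
    next
      fix x y assume "x \<in> ?K" "y \<in> ?K"
      then obtain c c' where "\<forall>j\<in>J. 0 \<le> c j" "x = (\<Sum>j\<in>J. c j *\<^sub>R q j)"
        "\<forall>j\<in>J. 0 \<le> c' j" "y = (\<Sum>j\<in>J. c' j *\<^sub>R q j)"
        by blast
      then show "x + y \<in> ?K"
        by (intro CollectI exI[of _ "\<lambda>j. c j + c' j"]) (auto simp: scaleR_add_left sum.distrib)
    next
      fix x and t :: real assume "x \<in> ?K" "0 \<le> t"
      then obtain c where "\<forall>j\<in>J. 0 \<le> c j" "x = (\<Sum>j\<in>J. c j *\<^sub>R q j)"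
        by blast
      with \<open>0 \<le> t\<close> show "t *\<^sub>R x \<in> ?K"
        by (intro CollectI exI[of _ "\<lambda>j. t * c j"]) (auto simp: scaleR_sum_right)
    qed
  qed
  show "?K \<subseteq> convex_cone hull (q ` J)"
  proof clarify
    fix c assume "\<forall>j\<in>J. 0 \<le> (c j :: real)"
    then show "(\<Sum>j\<in>J. c j *\<^sub>R q j) \<in> convex_cone hull (q ` J)"
      by (intro convex_cone_sum[OF convex_cone_convex_cone_hull assms]) (simp add: hull_inc)
  qed
qed

theorem Farkas_lemma:
  fixes q :: "'j \<Rightarrow> 'a::euclidean_space"
  assumes fin: "finite J" and polar: "\<And>d. \<forall>j\<in>J. q j \<bullet> d \<le> 0 \<Longrightarrow> v \<bullet> d \<le> 0"
  obtains c where "\<forall>j\<in>J. 0 \<le> c j" "v = (\<Sum>j\<in>J. c j *\<^sub>R q j)"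
proof (rule ccontr)
  assume "\<not> thesis"
  with that have "v \<notin> convex_cone hull (q ` J)"
    by (auto simp: convex_cone_hull_finite[OF fin])
  then obtain a b where ab: "a \<bullet> v < b" "\<forall>x\<in>convex_cone hull (q ` J). a \<bullet> x > b"
    using separating_hyperplane_closed_point[OF convex_convex_cone_hull closed_convex_cone_hull]
      fin by blast
  then have "b < 0"
    using convex_cone_hull_contains_0 by (metis inner_zero_right)
  have "a \<bullet> q j \<ge> 0" if "j \<in> J" for j
  proof (rule ccontr)
    assume neg: "\<not> a \<bullet> q j \<ge> 0"
    have "(b / (a \<bullet> q j)) *\<^sub>R q j \<in> convex_cone hull (q ` J)"
      using that neg \<open>b < 0\<close>
      by (intro convex_cone_hull_mul hull_inc) (auto intro: divide_nonpos_neg)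
    moreover have "a \<bullet> ((b / (a \<bullet> q j)) *\<^sub>R q j) = b"
      using neg by simp
    ultimately show False
      using ab(2) by fastforce
  qed
  then have "v \<bullet> (- a) \<le> 0"
    by (intro polar) (simp add: inner_commute)
  then show False
    using ab \<open>b < 0\<close> by (simp add: inner_commute)
qed

lemma sum_scaleR_if_subset:
  fixes v :: "'b \<Rightarrow> 'a::real_vector"
  assumes "finite A" "B \<subseteq> A"
  shows "(\<Sum>i\<in>A. (if i \<in> B then c i else 0) *\<^sub>R v i) = (\<Sum>i\<in>B. c i *\<^sub>R v i)"
proof -
  have "(\<Sum>i\<in>A. (if i \<in> B then c i else 0) *\<^sub>R v i) = (\<Sum>i\<in>A. if i \<in> B then c i *\<^sub>R v i else 0)"
    by (rule sum.cong) auto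
  also have "\<dots> = (\<Sum>i\<in>B. c i *\<^sub>R v i)"
    using assms by (simp add: sum.inter_restrict[symmetric] Int_absorb1 Int_absorb2)
  finally show ?thesis .
qed

corollary Farkas_lemma_equalities:
  fixes q :: "'j \<Rightarrow> 'a::euclidean_space"
  assumes fin: "finite J" and "E \<subseteq> J"
    and polar: "\<And>d. \<forall>j\<in>J - E. q j \<bullet> d \<le> 0 \<Longrightarrow> \<forall>j\<in>E. q j \<bullet> d = 0 \<Longrightarrow> v \<bullet> d \<le> 0"
  obtains c where "\<forall>j\<in>J - E. 0 \<le> c j" "v = (\<Sum>j\<in>J. c j *\<^sub>R q j)"
proof -
  have finE: "finite E"
    using assms(2) fin finite_subset by blast
  \<comment> \<open>Each equality is split into two opposite inequalities.\<close>
  define q' where "q' = case_sum q (\<lambda>j. - q j)"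
  have polar': "v \<bullet> d \<le> 0" if d: "\<forall>j\<in>J <+> E. q' j \<bullet> d \<le> 0" for d
  proof (rule polar)
    have le: "q j \<bullet> d \<le> 0" if "j \<in> J" for j
      using d[rule_format, OF InlI[OF that]] by (simp add: q'_def)
    have ge: "q j \<bullet> d \<ge> 0" if "j \<in> E" for j
      using d[rule_format, OF InrI[OF that]] by (simp add: q'_def)
    show "\<forall>j\<in>J - E. q j \<bullet> d \<le> 0"
      using le by blast
    show "\<forall>j\<in>E. q j \<bullet> d = 0"
      using le ge assms(2) by (meson order.antisym subsetD)
  qed
  obtain c where c: "\<forall>j\<in>J <+> E. 0 \<le> c j" and v: "v = (\<Sum>j\<in>J <+> E. c j *\<^sub>R q' j)"
    using Farkas_lemma[OF finite_Plus[OF fin finE] polar'] by blast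
  have "v = (\<Sum>j\<in>J. c (Inl j) *\<^sub>R q j) + (\<Sum>j\<in>E. c (Inr j) *\<^sub>R - q j)"
    unfolding v sum.Plus[OF fin finE] by (simp add: q'_def)
  also have "\<dots> = (\<Sum>j\<in>J. c (Inl j) *\<^sub>R q j) - (\<Sum>j\<in>E. c (Inr j) *\<^sub>R q j)"
    by (simp add: sum_negf)
  also have "(\<Sum>j\<in>E. c (Inr j) *\<^sub>R q j) = (\<Sum>j\<in>J. (if j \<in> E then c (Inr j) else 0) *\<^sub>R q j)"
    by (rule sum_scaleR_if_subset[OF fin assms(2), symmetric])
  finally have "v = (\<Sum>j\<in>J. (c (Inl j) - (if j \<in> E then c (Inr j) else 0)) *\<^sub>R q j)"
    by (simp add: scaleR_diff_left sum_subtractf)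
  moreover have "\<forall>j\<in>J - E. 0 \<le> c (Inl j) - (if j \<in> E then c (Inr j) else 0)"
    using c[rule_format, OF InlI] by simp
  ultimately show ?thesis
    by (rule that[rotated])
qed

lemma sum_sum_scaleR_swap:
  fixes v :: "'i \<Rightarrow> 'a::real_vector"
  shows "(\<Sum>i\<in>I. (\<Sum>Q\<in>P. w Q * a Q i) *\<^sub>R v i) = (\<Sum>Q\<in>P. w Q *\<^sub>R (\<Sum>i\<in>I. a Q i *\<^sub>R v i))"
  by (simp add: scaleR_sum_left scaleR_sum_right sum.swap[of _ I])

context
  fixes f :: "'a::euclidean_space \<Rightarrow> real" and g h G H :: "nat \<Rightarrow> 'a \<Rightarrow> real"
    and ng nh m :: nat and z :: 'a
begin

definition lagrangian_critical :: "(nat \<Rightarrow> real) \<Rightarrow> (nat \<Rightarrow> real) \<Rightarrow> (nat \<Rightarrow> real) \<Rightarrow> (nat \<Rightarrow> real) \<Rightarrow> bool"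
  where "lagrangian_critical lg lh lG lH \<longleftrightarrow>
    0 = grad f z + (\<Sum>i<ng. lg i *\<^sub>R grad (g i) z) + (\<Sum>i<nh. lh i *\<^sub>R grad (h i) z)
      - (\<Sum>i\<in>alpha_set G H m z \<union> beta_set G H m z. lG i *\<^sub>R grad (G i) z)
      - (\<Sum>i\<in>gamma_set G H m z \<union> beta_set G H m z. lH i *\<^sub>R grad (H i) z)"

text \<open>KKT multipliers of the tightened problem that imposes \<open>G\<^sub>i = 0 \<le> H\<^sub>i\<close> for \<open>i \<in> S\<close> and
  \<open>H\<^sub>i = 0 \<le> G\<^sub>i\<close> for the other biactive indices.\<close>
definition tightened_multipliers ::
  "nat set \<Rightarrow> (nat \<Rightarrow> real) \<Rightarrow> (nat \<Rightarrow> real) \<Rightarrow> (nat \<Rightarrow> real) \<Rightarrow> (nat \<Rightarrow> real) \<Rightarrow> bool"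
  where "tightened_multipliers S lg lh lG lH \<longleftrightarrow> lagrangian_critical lg lh lG lH \<and>
    (\<forall>i<ng. 0 \<le> lg i \<and> lg i * g i z = 0) \<and>
    (\<forall>i\<in>S. 0 \<le> lH i) \<and> (\<forall>i\<in>beta_set G H m z - S. 0 \<le> lG i)"

lemma piecewise_M_stationary_iff:
  "piecewise_M_stationary f g h G H ng nh m z \<longleftrightarrow>
    (\<forall>\<beta>1 \<beta>2. \<beta>1 \<union> \<beta>2 = beta_set G H m z \<and> \<beta>1 \<inter> \<beta>2 = {} \<longrightarrow>
      (\<exists>lg lh lG lH. lagrangian_critical lg lh lG lH \<and> (\<forall>i<ng. 0 \<le> lg i \<and> lg i * g i z = 0) \<and>
         (\<forall>i\<in>\<beta>1. 0 \<le> lH i) \<and> (\<forall>i\<in>\<beta>2. 0 \<le> lG i) \<and>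
         (\<forall>i\<in>beta_set G H m z. 0 \<le> lG i \<and> 0 \<le> lH i \<or> lG i * lH i = 0)))"
  unfolding piecewise_M_stationary_def lagrangian_critical_def ..

lemma finite_index_sets:
  "finite (alpha_set G H m z)" "finite (beta_set G H m z)" "finite (gamma_set G H m z)"
  "I_g g ng z \<subseteq> {..<ng}"
  by (auto simp: alpha_set_def beta_set_def gamma_set_def I_g_def
      intro: finite_subset[of _ "{..<m}"])

lemma beta_disjoint:
  "alpha_set G H m z \<inter> beta_set G H m z = {}" "gamma_set G H m z \<inter> beta_set G H m z = {}"
  by (auto simp: alpha_set_def beta_set_def gamma_set_def)

lemma lagrangian_critical_inner:
  assumes "lagrangian_critical lg lh lG lH"
  shows "grad f z \<bullet> d =
    - (\<Sum>i<ng. lg i * (grad (g i) z \<bullet> d)) - (\<Sum>i<nh. lh i * (grad (h i) z \<bullet> d))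
    + (\<Sum>i\<in>alpha_set G H m z \<union> beta_set G H m z. lG i * (grad (G i) z \<bullet> d))
    + (\<Sum>i\<in>gamma_set G H m z \<union> beta_set G H m z. lH i * (grad (H i) z \<bullet> d))"
proof -
  have "0 = grad f z \<bullet> d
    + (\<Sum>i<ng. lg i * (grad (g i) z \<bullet> d)) + (\<Sum>i<nh. lh i * (grad (h i) z \<bullet> d))
    - (\<Sum>i\<in>alpha_set G H m z \<union> beta_set G H m z. lG i * (grad (G i) z \<bullet> d))
    - (\<Sum>i\<in>gamma_set G H m z \<union> beta_set G H m z. lH i * (grad (H i) z \<bullet> d))"
    using arg_cong[OF assms[unfolded lagrangian_critical_def], of "\<lambda>x. x \<bullet> d"]
    by (simp add: inner_add_left inner_diff_left inner_sum_left)
  then show ?thesis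
    by linarith
qed

lemma inequality_multipliers_sum_nonpos:
  assumes lg: "\<forall>i<ng. 0 \<le> lg i \<and> lg i * g i z = 0"
    and dg: "\<forall>i\<in>I_g g ng z. grad (g i) z \<bullet> d \<le> 0"
  shows "(\<Sum>i<ng. lg i * (grad (g i) z \<bullet> d)) \<le> 0"
proof (rule sum_nonpos)
  fix i assume "i \<in> {..<ng}"
  then show "lg i * (grad (g i) z \<bullet> d) \<le> 0"
    using lg dg by (cases "g i z = 0") (auto simp: I_g_def mult_nonneg_nonpos)
qed

lemma piecewise_M_stationary_imp_lin_cone_nonneg:
  assumes pM: "piecewise_M_stationary f g h G H ng nh m z"
    and d: "d \<in> mpcc_lin_cone g h G H ng nh m z"
  shows "grad f z \<bullet> d \<ge> 0"
proof -
  let ?\<alpha> = "alpha_set G H m z" and ?\<beta> = "beta_set G H m z" and ?\<gamma> = "gamma_set G H m z"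
  \<comment> \<open>With this partition every biactive term of the Lagrangian has a sign.\<close>
  define \<beta>1 where "\<beta>1 = {i\<in>?\<beta>. grad (G i) z \<bullet> d = 0}"
  have "\<beta>1 \<union> (?\<beta> - \<beta>1) = ?\<beta> \<and> \<beta>1 \<inter> (?\<beta> - \<beta>1) = {}"
    by (auto simp: \<beta>1_def)
  from pM[unfolded piecewise_M_stationary_iff, rule_format, OF this]
  obtain lg lh lG lH where crit: "lagrangian_critical lg lh lG lH"
    and lg: "\<forall>i<ng. 0 \<le> lg i \<and> lg i * g i z = 0"
    and lH: "\<forall>i\<in>\<beta>1. 0 \<le> lH i" and lG: "\<forall>i\<in>?\<beta> - \<beta>1. 0 \<le> lG i"
    by blast
  have dg: "\<forall>i\<in>I_g g ng z. grad (g i) z \<bullet> d \<le> 0" and dh: "\<forall>i<nh. grad (h i) z \<bullet> d = 0"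
    and d\<alpha>: "\<forall>i\<in>?\<alpha>. grad (G i) z \<bullet> d = 0" and d\<gamma>: "\<forall>i\<in>?\<gamma>. grad (H i) z \<bullet> d = 0"
    and d\<beta>: "\<forall>i\<in>?\<beta>. grad (G i) z \<bullet> d \<ge> 0 \<and> grad (H i) z \<bullet> d \<ge> 0 \<and>
              (grad (G i) z \<bullet> d) * (grad (H i) z \<bullet> d) = 0"
    using d unfolding mpcc_lin_cone_def by blast+
  have "(\<Sum>i<ng. lg i * (grad (g i) z \<bullet> d)) \<le> 0"
    using lg dg by (rule inequality_multipliers_sum_nonpos)
  moreover have "(\<Sum>i<nh. lh i * (grad (h i) z \<bullet> d)) = 0"
    using dh by simp
  moreover have "lG i * (grad (G i) z \<bullet> d) \<ge> 0" if "i \<in> ?\<alpha> \<union> ?\<beta>" for i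
  proof (cases "i \<in> ?\<beta> - \<beta>1")
    case True
    with d\<beta> lG show ?thesis
      by simp
  next
    case False
    with that d\<alpha> have "grad (G i) z \<bullet> d = 0"
      by (auto simp: \<beta>1_def)
    then show ?thesis
      by simp
  qed
  then have "(\<Sum>i\<in>?\<alpha> \<union> ?\<beta>. lG i * (grad (G i) z \<bullet> d)) \<ge> 0"
    by (rule sum_nonneg)
  moreover have "lH i * (grad (H i) z \<bullet> d) \<ge> 0" if "i \<in> ?\<gamma> \<union> ?\<beta>" for i
  proof (cases "i \<in> \<beta>1")
    case True
    with d\<beta> lH show ?thesis
      by (simp add: \<beta>1_def)
  next
    case False
    with that d\<gamma> d\<beta> have "grad (H i) z \<bullet> d = 0"
      by (auto simp: \<beta>1_def)
    then show ?thesis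
      by simp
  qed
  then have "(\<Sum>i\<in>?\<gamma> \<union> ?\<beta>. lH i * (grad (H i) z \<bullet> d)) \<ge> 0"
    by (rule sum_nonneg)
  ultimately show ?thesis
    unfolding lagrangian_critical_inner[OF crit] by linarith
qed

lemma mpcc_lin_cone_if_tightened:
  assumes "S \<subseteq> beta_set G H m z"
    and "\<forall>i\<in>I_g g ng z. grad (g i) z \<bullet> d \<le> 0" "\<forall>i<nh. grad (h i) z \<bullet> d = 0"
    and "\<forall>i\<in>alpha_set G H m z \<union> S. grad (G i) z \<bullet> d = 0"
    and "\<forall>i\<in>gamma_set G H m z \<union> (beta_set G H m z - S). grad (H i) z \<bullet> d = 0"
    and "\<forall>i\<in>beta_set G H m z - S. grad (G i) z \<bullet> d \<ge> 0" "\<forall>i\<in>S. grad (H i) z \<bullet> d \<ge> 0"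
  shows "d \<in> mpcc_lin_cone g h G H ng nh m z"
  using assms unfolding mpcc_lin_cone_def by auto

lemma tightened_multipliers_exist:
  assumes B: "\<forall>d\<in>mpcc_lin_cone g h G H ng nh m z. grad f z \<bullet> d \<ge> 0"
    and S: "S \<subseteq> beta_set G H m z"
  shows "\<exists>lg lh lG lH. tightened_multipliers S lg lh lG lH"
proof -
  let ?\<alpha> = "alpha_set G H m z" and ?\<beta> = "beta_set G H m z" and ?\<gamma> = "gamma_set G H m z"
    and ?I = "I_g g ng z"
  have fin: "finite ?I" "finite ?\<alpha>" "finite ?\<beta>" "finite ?\<gamma>"
    using finite_index_sets finite_subset by (metis finite_lessThan)+
  have mem: "Inl x \<in> X <+> Y \<longleftrightarrow> x \<in> X" "Inr y \<in> X <+> Y \<longleftrightarrow> y \<in> Y" for x y X Y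
    by auto
  \<comment> \<open>The linearized constraints of the tightened problem, with each equality marked by \<open>E\<close>.\<close>
  define J where "J = ?I <+> ({..<nh} <+> ((?\<alpha> \<union> ?\<beta>) <+> (?\<gamma> \<union> ?\<beta>)))"
  define E where "E = ({} :: nat set) <+> ({..<nh} <+> ((?\<alpha> \<union> S) <+> (?\<gamma> \<union> (?\<beta> - S))))"
  define q where "q = case_sum (\<lambda>i. grad (g i) z)
    (case_sum (\<lambda>i. grad (h i) z) (case_sum (\<lambda>i. - grad (G i) z) (\<lambda>i. - grad (H i) z)))"
  have finJ: "finite J"
    using fin by (simp add: J_def)
  have EJ: "E \<subseteq> J"
    using S by (auto simp: E_def J_def)
  have polar: "- grad f z \<bullet> d \<le> 0"
    if le: "\<forall>j\<in>J - E. q j \<bullet> d \<le> 0" and eq: "\<forall>j\<in>E. q j \<bullet> d = 0" for d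
  proof -
    have "\<forall>i\<in>?I. q (Inl i) \<bullet> d \<le> 0" "\<forall>i<nh. q (Inr (Inl i)) \<bullet> d = 0"
      "\<forall>i\<in>?\<alpha> \<union> S. q (Inr (Inr (Inl i))) \<bullet> d = 0"
      "\<forall>i\<in>?\<gamma> \<union> (?\<beta> - S). q (Inr (Inr (Inr i))) \<bullet> d = 0"
      "\<forall>i\<in>?\<beta> - S. q (Inr (Inr (Inl i))) \<bullet> d \<le> 0" "\<forall>i\<in>S. q (Inr (Inr (Inr i))) \<bullet> d \<le> 0"
      using le eq S beta_disjoint by (auto simp: J_def E_def mem)
    then have "d \<in> mpcc_lin_cone g h G H ng nh m z"
      by (intro mpcc_lin_cone_if_tightened[OF S]) (simp_all add: q_def)
    with B show ?thesis
      by simp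
  qed
  obtain c where c: "\<forall>j\<in>J - E. 0 \<le> c j" and v: "- grad f z = (\<Sum>j\<in>J. c j *\<^sub>R q j)"
    using Farkas_lemma_equalities[OF finJ EJ polar] by blast
  define lg where "lg i = (if i \<in> ?I then c (Inl i) else 0)" for i
  define lh where "lh i = c (Inr (Inl i))" for i
  define lG where "lG i = c (Inr (Inr (Inl i)))" for i
  define lH where "lH i = c (Inr (Inr (Inr i)))" for i
  have "- grad f z = (\<Sum>i\<in>?I. c (Inl i) *\<^sub>R grad (g i) z) + (\<Sum>i<nh. lh i *\<^sub>R grad (h i) z)
      - (\<Sum>i\<in>?\<alpha> \<union> ?\<beta>. lG i *\<^sub>R grad (G i) z) - (\<Sum>i\<in>?\<gamma> \<union> ?\<beta>. lH i *\<^sub>R grad (H i) z)"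
    unfolding v J_def using fin
    by (simp add: sum.Plus q_def lh_def lG_def lH_def sum_negf algebra_simps)
  moreover have "(\<Sum>i<ng. lg i *\<^sub>R grad (g i) z) = (\<Sum>i\<in>?I. c (Inl i) *\<^sub>R grad (g i) z)"
    unfolding lg_def using finite_index_sets(4) by (simp add: sum_scaleR_if_subset)
  ultimately have "lagrangian_critical lg lh lG lH"
    unfolding lagrangian_critical_def by (simp add: algebra_simps)
  moreover have "\<forall>i<ng. 0 \<le> lg i \<and> lg i * g i z = 0"
    using c by (auto simp: lg_def J_def E_def mem I_g_def)
  moreover have "\<forall>i\<in>S. 0 \<le> lH i" "\<forall>i\<in>?\<beta> - S. 0 \<le> lG i"
    using c S beta_disjoint by (auto simp: lH_def lG_def J_def E_def mem)
  ultimately show ?thesis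
    unfolding tightened_multipliers_def by blast
qed

lemma lagrangian_critical_convex_combination:
  assumes "finite P" "sum w P = 1"
    and crit: "\<And>Q. Q \<in> P \<Longrightarrow> lagrangian_critical (Lg Q) (Lh Q) (LG Q) (LH Q)"
  shows "lagrangian_critical (\<lambda>i. \<Sum>Q\<in>P. w Q * Lg Q i) (\<lambda>i. \<Sum>Q\<in>P. w Q * Lh Q i)
    (\<lambda>i. \<Sum>Q\<in>P. w Q * LG Q i) (\<lambda>i. \<Sum>Q\<in>P. w Q * LH Q i)"
proof -
  let ?L = "\<lambda>Q. grad f z + (\<Sum>i<ng. Lg Q i *\<^sub>R grad (g i) z) + (\<Sum>i<nh. Lh Q i *\<^sub>R grad (h i) z)
      - (\<Sum>i\<in>alpha_set G H m z \<union> beta_set G H m z. LG Q i *\<^sub>R grad (G i) z)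
      - (\<Sum>i\<in>gamma_set G H m z \<union> beta_set G H m z. LH Q i *\<^sub>R grad (H i) z)"
  have "?L Q = 0" if "Q \<in> P" for Q
    using crit[OF that] unfolding lagrangian_critical_def by simp
  then have "0 = (\<Sum>Q\<in>P. w Q *\<^sub>R ?L Q)"
    by simp
  also have "\<dots> = (\<Sum>Q\<in>P. w Q) *\<^sub>R grad f z
      + (\<Sum>Q\<in>P. w Q *\<^sub>R (\<Sum>i<ng. Lg Q i *\<^sub>R grad (g i) z))
      + (\<Sum>Q\<in>P. w Q *\<^sub>R (\<Sum>i<nh. Lh Q i *\<^sub>R grad (h i) z))
      - (\<Sum>Q\<in>P. w Q *\<^sub>R (\<Sum>i\<in>alpha_set G H m z \<union> beta_set G H m z. LG Q i *\<^sub>R grad (G i) z))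
      - (\<Sum>Q\<in>P. w Q *\<^sub>R (\<Sum>i\<in>gamma_set G H m z \<union> beta_set G H m z. LH Q i *\<^sub>R grad (H i) z))"
    by (simp add: scaleR_add_right scaleR_diff_right sum.distrib sum_subtractf scaleR_sum_left)
  finally show ?thesis
    unfolding lagrangian_critical_def sum_sum_scaleR_swap using assms(2) by simp
qed

lemma lin_cone_nonneg_imp_piecewise_M_stationary:
  assumes B: "\<forall>d\<in>mpcc_lin_cone g h G H ng nh m z. grad f z \<bullet> d \<ge> 0"
  shows "piecewise_M_stationary f g h G H ng nh m z"
  unfolding piecewise_M_stationary_iff
proof (intro allI impI)
  let ?\<beta> = "beta_set G H m z"
  fix \<beta>1 \<beta>2 assume part: "\<beta>1 \<union> \<beta>2 = ?\<beta> \<and> \<beta>1 \<inter> \<beta>2 = {}"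
  have "\<forall>S. \<exists>lg lh lG lH. S \<subseteq> ?\<beta> \<longrightarrow> tightened_multipliers S lg lh lG lH"
    using tightened_multipliers_exist[OF B] by blast
  then obtain Lg Lh LG LH
    where L: "\<And>S. S \<subseteq> ?\<beta> \<Longrightarrow> tightened_multipliers S (Lg S) (Lh S) (LG S) (LH S)"
    by metis
  have LH_nonneg: "0 \<le> LH S j" if "S \<subseteq> ?\<beta>" "j \<in> S" for S j
    using L[OF that(1)] that(2) by (simp add: tightened_multipliers_def)
  have LG_nonneg: "0 \<le> LG S j" if "S \<subseteq> ?\<beta>" "j \<in> ?\<beta> - S" for S j
    using L[OF that(1)] that(2) by (simp add: tightened_multipliers_def)
  have "\<beta>1 \<subseteq> ?\<beta>" "?\<beta> - \<beta>1 = \<beta>2"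
    using part by blast+
  obtain w where w: "\<forall>S\<in>Pow ?\<beta>. 0 \<le> w S" "sum w (Pow ?\<beta>) = 1"
    and sign1: "\<forall>j\<in>\<beta>1. 0 \<le> (\<Sum>S\<in>Pow ?\<beta>. w S * LH S j) \<and>
      (0 \<le> (\<Sum>S\<in>Pow ?\<beta>. w S * LG S j) \<or> (\<Sum>S\<in>Pow ?\<beta>. w S * LH S j) = 0)"
    and sign2: "\<forall>j\<in>?\<beta> - \<beta>1. 0 \<le> (\<Sum>S\<in>Pow ?\<beta>. w S * LG S j) \<and>
      (0 \<le> (\<Sum>S\<in>Pow ?\<beta>. w S * LH S j) \<or> (\<Sum>S\<in>Pow ?\<beta>. w S * LG S j) = 0)"
    by (rule partition_sign_pattern_convex_combination
        [OF finite_index_sets(2) \<open>\<beta>1 \<subseteq> ?\<beta>\<close> LH_nonneg LG_nonneg])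
  have crit: "\<forall>S\<in>Pow ?\<beta>. tightened_multipliers S (Lg S) (Lh S) (LG S) (LH S)"
    using L by blast
  let ?avg = "\<lambda>L i. \<Sum>S\<in>Pow ?\<beta>. w S * L S i"
  show "\<exists>lg lh lG lH. lagrangian_critical lg lh lG lH \<and> (\<forall>i<ng. 0 \<le> lg i \<and> lg i * g i z = 0) \<and>
         (\<forall>i\<in>\<beta>1. 0 \<le> lH i) \<and> (\<forall>i\<in>\<beta>2. 0 \<le> lG i) \<and>
         (\<forall>i\<in>?\<beta>. 0 \<le> lG i \<and> 0 \<le> lH i \<or> lG i * lH i = 0)"
  proof (rule exI[of _ "?avg Lg"], rule exI[of _ "?avg Lh"], rule exI[of _ "?avg LG"],
      rule exI[of _ "?avg LH"], intro conjI)
    show "lagrangian_critical (?avg Lg) (?avg Lh) (?avg LG) (?avg LH)"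
      using crit w(2) finite_index_sets(2)
      by (intro lagrangian_critical_convex_combination) (auto simp: tightened_multipliers_def)
    show "\<forall>i<ng. 0 \<le> ?avg Lg i \<and> ?avg Lg i * g i z = 0"
      using crit w(1) unfolding tightened_multipliers_def sum_distrib_right
      by (auto simp: mult.assoc intro!: sum_nonneg sum.neutral)
    show "\<forall>i\<in>\<beta>1. 0 \<le> ?avg LH i" "\<forall>i\<in>\<beta>2. 0 \<le> ?avg LG i"
      using sign1 sign2 \<open>?\<beta> - \<beta>1 = \<beta>2\<close> by auto
    show "\<forall>i\<in>?\<beta>. 0 \<le> ?avg LG i \<and> 0 \<le> ?avg LH i \<or> ?avg LG i * ?avg LH i = 0"
      using sign1 sign2 by auto
  qed
qed

end

theorem corollary2p4:
  fixes f :: "'a::euclidean_space \<Rightarrow> real"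
    and g h G H :: "nat \<Rightarrow> 'a \<Rightarrow> real"
    and ng nh m :: nat and zbar :: 'a
  assumes "\<forall>z. f differentiable (at z)"
    and "\<forall>i<ng. \<forall>z. g i differentiable (at z)"
    and "\<forall>i<nh. \<forall>z. h i differentiable (at z)"
    and "\<forall>i<m. \<forall>z. G i differentiable (at z)"
    and "\<forall>i<m. \<forall>z. H i differentiable (at z)"
    and "zbar \<in> mpcc_feasible g h G H ng nh m"
    and "MPCC_ACQ g h G H ng nh m zbar"
  shows "B_stationary f g h G H ng nh m zbar \<longleftrightarrow> piecewise_M_stationary f g h G H ng nh m zbar"
proof -
  have "B_stationary f g h G H ng nh m zbar \<longleftrightarrow>
      (\<forall>d\<in>mpcc_lin_cone g h G H ng nh m zbar. grad f zbar \<bullet> d \<ge> 0)"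
    using assms(7) by (simp add: B_stationary_def MPCC_ACQ_def)
  then show ?thesis
    using lin_cone_nonneg_imp_piecewise_M_stationary piecewise_M_stationary_imp_lin_cone_nonneg
    by blast
qed

end
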